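(* Let $n\geq 3$ and $R=K[x_1,\ldots,x_n]$ a polynomial ring over a field $K$. Then the ideal $L=(x_ix_{i+1}x_{i+2} : i=1,\ldots,n-2)\subset R$ (the path ideal of paths of length two in the path graph on $x_1,\ldots,x_n$) is normally torsion-free.
   Context: An ideal $I$ in $R$ is normally torsion-free if $\mathrm{Ass}(R/I^k)\subseteq\mathrm{Ass}(R/I)$ for all $k\geq 1$, where $\mathrm{Ass}$ denotes the set of associated primes. *)

theory Defs
  imports "HOL-Library.Poly_Mapping" "HOL-Algebra.Ideal_Product"
begin

text \<open>Polynomial ring K[x_1,...,x_n]: finitely supported maps from monomials
  (exponent vectors nat =>0 nat) to coefficients in K, restricted to those
  polynomials all of whose monomials only involve the variables x_1,...,x_n.\<close>

definition poly_ring :: "nat \<Rightarrow> ((nat \<Rightarrow>\<^sub>0 nat) \<Rightarrow>\<^sub>0 'k::field) ring" where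
  "poly_ring n = \<lparr> carrier = {p. \<forall>m \<in> Poly_Mapping.keys p. Poly_Mapping.keys m \<subseteq> {1..n}},
                   mult = (*), one = 1, zero = 0, add = (+) \<rparr>"

definition var :: "nat \<Rightarrow> (nat \<Rightarrow>\<^sub>0 nat) \<Rightarrow>\<^sub>0 'k::field" where
  "var i = Poly_Mapping.single (Poly_Mapping.single i 1) 1"

definition path_ideal :: "nat \<Rightarrow> ((nat \<Rightarrow>\<^sub>0 nat) \<Rightarrow>\<^sub>0 'k::field) set" where
  "path_ideal n = genideal (poly_ring n)
     {var i * var (i+1) * var (i+2) | i. 1 \<le> i \<and> i \<le> n - 2}"

primrec ideal_pow :: "('a, 'b) ring_scheme \<Rightarrow> 'a set \<Rightarrow> nat \<Rightarrow> 'a set" where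
  "ideal_pow R I 0 = carrier R"
| "ideal_pow R I (Suc k) = ideal_prod R I (ideal_pow R I k)"

text \<open>Associated primes of the R-module R/I: primes that are annihilators
  (I : x) of some element x + I of R/I.\<close>
definition ass :: "('a, 'b) ring_scheme \<Rightarrow> 'a set \<Rightarrow> 'a set set" where
  "ass R I = {P. primeideal P R \<and>
                 (\<exists>x \<in> carrier R. P = {r \<in> carrier R. r \<otimes>\<^bsub>R\<^esub> x \<in> I})}"

definition normally_torsion_free :: "('a, 'b) ring_scheme \<Rightarrow> 'a set \<Rightarrow> bool" where
  "normally_torsion_free R I \<longleftrightarrow> (\<forall>k \<ge> 1. ass R (ideal_pow R I k) \<subseteq> ass R I)"

end

theory Submission
  imports Defs "HOL-Library.Set_Algebras"
begin

text \<open>A monomial is divisible by a product of \<open>k\<close> generators of the path ideal \<open>L\<close> iff, for every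
  minimal vertex cover \<open>C\<close> of the paths \<open>{i, i+1, i+2}\<close>, its degree in the variables of \<open>C\<close> is
  at least \<open>k\<close>; a greedy walk along the path produces the required generators. Hence \<open>L\<^sup>k\<close> is
  the intersection of the powers \<open>P\<^sub>C\<^sup>k\<close> of the monomial primes \<open>P\<^sub>C = (x\<^sub>i : i \<in> C)\<close>,
  and \<open>P\<^sub>C\<^sup>k\<close> is \<open>P\<^sub>C\<close>-primary because the degree in the variables of \<open>C\<close> is a valuation.
  A prime \<open>(L\<^sup>k : x)\<close> therefore equals some colon \<open>(P\<^sub>C\<^sup>k : x)\<close> and hence \<open>P\<^sub>C\<close>; finally
  \<open>P\<^sub>C = (L : u)\<close> for the product \<open>u\<close> of the variables outside \<open>C\<close>, by minimality of \<open>C\<close>.\<close>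

type_synonym monomial = "nat \<Rightarrow>\<^sub>0 nat"
type_synonym 'k mpoly = "monomial \<Rightarrow>\<^sub>0 'k"

subsection \<open>The polynomial ring\<close>

lemma carrier_poly_ring:
  "carrier (poly_ring n) = {p. \<forall>m \<in> Poly_Mapping.keys p. Poly_Mapping.keys m \<subseteq> {1..n}}"
  by (simp add: poly_ring_def)

lemma poly_ring_simps [simp]:
  "mult (poly_ring n) = (*)" "one (poly_ring n) = 1" "zero (poly_ring n) = 0" "add (poly_ring n) = (+)"
  by (simp_all add: poly_ring_def)

lemma poly_ring_add_closed:
  "p \<in> carrier (poly_ring n) \<Longrightarrow> q \<in> carrier (poly_ring n) \<Longrightarrow> p + q \<in> carrier (poly_ring n)"
  unfolding carrier_poly_ring using Poly_Mapping.keys_add[of p q] by blast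

lemma poly_ring_mult_closed:
  assumes "p \<in> carrier (poly_ring n)" "q \<in> carrier (poly_ring n)"
  shows "p * q \<in> carrier (poly_ring n)"
  unfolding carrier_poly_ring
proof safe
  fix m i assume "m \<in> Poly_Mapping.keys (p * q)" "i \<in> Poly_Mapping.keys m"
  then obtain a b where "i \<in> Poly_Mapping.keys (a + b)"
      "a \<in> Poly_Mapping.keys p" "b \<in> Poly_Mapping.keys q"
    using Poly_Mapping.keys_mult[of p q] by blast
  then show "i \<in> {1..n}"
    using assms Poly_Mapping.keys_add[of a b] unfolding carrier_poly_ring by blast
qed

lemma poly_ring_uminus_closed: "p \<in> carrier (poly_ring n) \<Longrightarrow> - p \<in> carrier (poly_ring n)"
  unfolding carrier_poly_ring by simp

lemma poly_ring_zero_closed [simp]: "0 \<in> carrier (poly_ring n)"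
  and poly_ring_one_closed [simp]: "1 \<in> carrier (poly_ring n)"
  unfolding carrier_poly_ring by auto

lemma poly_ring_single_closed:
  "Poly_Mapping.keys m \<subseteq> {1..n} \<Longrightarrow> Poly_Mapping.single m c \<in> carrier (poly_ring n)"
  unfolding carrier_poly_ring by simp

lemma poly_ring_single_diff_closed:
  assumes "p \<in> carrier (poly_ring n)" "m \<in> Poly_Mapping.keys p"
  shows "Poly_Mapping.single (m - g) c \<in> carrier (poly_ring n)"
proof -
  have "Poly_Mapping.keys (m - g) \<subseteq> Poly_Mapping.keys m"
    by (auto simp: in_keys_iff lookup_minus)
  then show ?thesis
    using assms by (intro poly_ring_single_closed) (auto simp: carrier_poly_ring)
qed

lemma var_closed: "i \<in> {1..n} \<Longrightarrow> var i \<in> carrier (poly_ring n)"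
  unfolding var_def by (rule poly_ring_single_closed) simp

lemma cring_poly_ring: "cring (poly_ring n :: 'k::field mpoly ring)"
proof (rule cringI)
  show "abelian_group (poly_ring n :: 'k mpoly ring)"
  proof (rule abelian_groupI)
    fix p :: "'k mpoly" assume "p \<in> carrier (poly_ring n)"
    then show "\<exists>q\<in>carrier (poly_ring n). q \<oplus>\<^bsub>poly_ring n\<^esub> p = \<zero>\<^bsub>poly_ring n\<^esub>"
      by (intro bexI[of _ "- p"] poly_ring_uminus_closed) simp_all
  qed (auto simp: poly_ring_add_closed add.assoc add.commute)
  show "Group.comm_monoid (poly_ring n :: 'k mpoly ring)"
    by (rule comm_monoidI) (auto simp: poly_ring_mult_closed mult.assoc mult.commute)
qed (simp add: distrib_right)

lemma poly_ring_a_inv: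
  assumes "p \<in> carrier (poly_ring n :: 'k::field mpoly ring)"
  shows "\<ominus>\<^bsub>poly_ring n\<^esub> p = - p"
proof -
  interpret cring "poly_ring n :: 'k mpoly ring" by (rule cring_poly_ring)
  show ?thesis by (rule minus_equality) (simp_all add: assms poly_ring_uminus_closed)
qed

lemma poly_ring_nat_pow: "p [^]\<^bsub>poly_ring n\<^esub> k = p ^ k"
  by (induction k) (simp_all add: mult.commute)

lemma poly_mapping_sum_singles:
  "f = (\<Sum>m\<in>Poly_Mapping.keys f. Poly_Mapping.single m (Poly_Mapping.lookup f m))"
  by (rule poly_mapping_eqI) (simp add: lookup_sum lookup_single when_def sum.delta in_keys_iff)

lemma poly_ring_ideal_memI:
  assumes "ideal I (poly_ring n :: 'k::field mpoly ring)"
    and "\<And>m. m \<in> Poly_Mapping.keys f \<Longrightarrow> Poly_Mapping.single m (Poly_Mapping.lookup f m) \<in> I"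
  shows "f \<in> I"
proof -
  interpret ideal I "poly_ring n :: 'k mpoly ring" by fact
  have "(\<Sum>m\<in>M. Poly_Mapping.single m (Poly_Mapping.lookup f m)) \<in> I"
    if "M \<subseteq> Poly_Mapping.keys f" for M
    using finite_subset[OF that finite_keys] that
  proof (induction M rule: finite_induct)
    case empty
    then show ?case using additive_subgroup.zero_closed[OF is_additive_subgroup] by simp
  next
    case (insert m M)
    then show ?case using additive_subgroup.a_closed[OF is_additive_subgroup assms(2)] by simp
  qed
  then show ?thesis by (subst poly_mapping_sum_singles) simp
qed

subsection \<open>Monomial ideals\<close>

definition support_ideal :: "nat \<Rightarrow> (monomial \<Rightarrow> bool) \<Rightarrow> 'k::field mpoly set" where
  "support_ideal n \<Phi> = {f \<in> carrier (poly_ring n). \<forall>m \<in> Poly_Mapping.keys f. \<Phi> m}"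

lemma ideal_support_ideal:
  assumes up: "\<And>m m'. \<Phi> m \<Longrightarrow> \<Phi> (m' + m)"
  shows "ideal (support_ideal n \<Phi> :: 'k::field mpoly set) (poly_ring n)"
proof -
  interpret cring "poly_ring n :: 'k mpoly ring" by (rule cring_poly_ring)
  have mult_closed: "q * p \<in> support_ideal n \<Phi>"
    if "p \<in> support_ideal n \<Phi>" "q \<in> carrier (poly_ring n)" for p q :: "'k mpoly"
  proof -
    have "\<Phi> m" if "m \<in> Poly_Mapping.keys (q * p)" for m
    proof -
      obtain a b where "m = a + b" "b \<in> Poly_Mapping.keys p"
        using Poly_Mapping.keys_mult[of q p] \<open>m \<in> _\<close> by blast
      then show ?thesis using \<open>p \<in> support_ideal n \<Phi>\<close> up unfolding support_ideal_def by auto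
    qed
    then show ?thesis using that poly_ring_mult_closed unfolding support_ideal_def by auto
  qed
  show ?thesis
  proof (rule idealI)
    show "subgroup (support_ideal n \<Phi> :: 'k mpoly set) (add_monoid (poly_ring n))"
    proof (rule add.subgroupI)
      have "0 \<in> support_ideal n \<Phi>" by (simp add: support_ideal_def)
      then show "support_ideal n \<Phi> \<noteq> {}" by blast
    qed (auto simp: support_ideal_def poly_ring_a_inv poly_ring_uminus_closed poly_ring_add_closed
        dest: subsetD[OF Poly_Mapping.keys_add])
  qed (use mult_closed in \<open>auto simp: mult.commute ring_axioms\<close>)
qed

definition monomial_dvd :: "monomial \<Rightarrow> monomial \<Rightarrow> bool" where
  "monomial_dvd g m \<longleftrightarrow> (\<forall>i. Poly_Mapping.lookup g i \<le> Poly_Mapping.lookup m i)"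

lemma monomial_dvd_refl: "monomial_dvd g g"
  unfolding monomial_dvd_def by simp

lemma monomial_dvd_add: "monomial_dvd g m \<Longrightarrow> monomial_dvd h m' \<Longrightarrow> monomial_dvd (g + h) (m + m')"
  unfolding monomial_dvd_def by (simp add: lookup_add add_mono)

lemma monomial_dvd_add_left: "monomial_dvd g m \<Longrightarrow> monomial_dvd g (m' + m)"
  unfolding monomial_dvd_def lookup_add by (metis le_add2 order_trans)

lemma single_eq_mult_single:
  "monomial_dvd g m \<Longrightarrow>
    Poly_Mapping.single m c = Poly_Mapping.single (m - g) c * (Poly_Mapping.single g 1 :: 'k::field mpoly)"
  unfolding monomial_dvd_def
  by (simp add: mult_single, intro arg_cong2[where f = Poly_Mapping.single] poly_mapping_eqI)
    (simp_all add: lookup_add lookup_minus)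

definition monomial_ideal :: "nat \<Rightarrow> monomial set \<Rightarrow> 'k::field mpoly set" where
  "monomial_ideal n G = support_ideal n (\<lambda>m. \<exists>g\<in>G. monomial_dvd g m)"

lemma ideal_monomial_ideal: "ideal (monomial_ideal n G :: 'k::field mpoly set) (poly_ring n)"
  unfolding monomial_ideal_def by (rule ideal_support_ideal) (auto intro: monomial_dvd_add_left)

lemma single_in_monomial_ideal:
  "g \<in> G \<Longrightarrow> Poly_Mapping.keys g \<subseteq> {1..n} \<Longrightarrow> Poly_Mapping.single g 1 \<in> monomial_ideal n G"
  using poly_ring_single_closed[of g n 1] unfolding monomial_ideal_def support_ideal_def
  by (auto intro: monomial_dvd_refl)

lemma genideal_eq_monomial_ideal:
  assumes G: "\<forall>g\<in>G. Poly_Mapping.keys g \<subseteq> {1..n}"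
  shows "genideal (poly_ring n) ((\<lambda>g. Poly_Mapping.single g 1) ` G) = (monomial_ideal n G :: 'k::field mpoly set)"
proof -
  interpret cring "poly_ring n :: 'k mpoly ring" by (rule cring_poly_ring)
  let ?S = "(\<lambda>g. Poly_Mapping.single g (1::'k)) ` G"
  have S: "?S \<subseteq> carrier (poly_ring n)" using G poly_ring_single_closed by blast
  show ?thesis
  proof
    show "genideal (poly_ring n) ?S \<subseteq> monomial_ideal n G"
      by (rule genideal_minimal[OF ideal_monomial_ideal]) (use G single_in_monomial_ideal in blast)
    show "monomial_ideal n G \<subseteq> genideal (poly_ring n) ?S"
    proof
      fix f :: "'k mpoly" assume f: "f \<in> monomial_ideal n G"
      show "f \<in> genideal (poly_ring n) ?S"
      proof (rule poly_ring_ideal_memI[OF genideal_ideal[OF S]])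
        fix m assume m: "m \<in> Poly_Mapping.keys f"
        then obtain g where "g \<in> G" "monomial_dvd g m"
          using f unfolding monomial_ideal_def support_ideal_def by auto
        moreover have "Poly_Mapping.single (m - g) (Poly_Mapping.lookup f m) \<in> carrier (poly_ring n)"
          using f m poly_ring_single_diff_closed unfolding monomial_ideal_def support_ideal_def by blast
        ultimately show "Poly_Mapping.single m (Poly_Mapping.lookup f m) \<in> genideal (poly_ring n) ?S"
          using genideal_self[OF S] ideal.I_l_closed[OF genideal_ideal[OF S]]
          by (auto simp: single_eq_mult_single)
      qed
    qed
  qed
qed

lemma ideal_prod_subset_monomial_ideal:
  "ideal_prod (poly_ring n) (monomial_ideal n G) (monomial_ideal n H) \<subseteq>
    (monomial_ideal n (G + H) :: 'k::field mpoly set)"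
proof
  fix s :: "'k mpoly" assume "s \<in> ideal_prod (poly_ring n) (monomial_ideal n G) (monomial_ideal n H)"
  then show "s \<in> monomial_ideal n (G + H)"
  proof (induct s rule: ideal_prod.induct)
    case (prod p q)
    have "\<exists>g\<in>G + H. monomial_dvd g m" if m: "m \<in> Poly_Mapping.keys (p * q)" for m
    proof -
      obtain a b where "m = a + b" "a \<in> Poly_Mapping.keys p" "b \<in> Poly_Mapping.keys q"
        using Poly_Mapping.keys_mult[of p q] m by blast
      moreover obtain g h where "g \<in> G" "monomial_dvd g a" "h \<in> H" "monomial_dvd h b"
        using prod \<open>a \<in> _\<close> \<open>b \<in> _\<close> unfolding monomial_ideal_def support_ideal_def by blast
      ultimately show ?thesis by (blast intro: monomial_dvd_add set_plus_intro)
    qed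
    then show ?case
      using prod poly_ring_mult_closed unfolding monomial_ideal_def support_ideal_def by auto
  next
    case (sum s1 s2)
    then show ?case using ideal.axioms(1)[OF ideal_monomial_ideal, THEN additive_subgroup.a_closed] by simp
  qed
qed

lemma monomial_ideal_subset_ideal_prod:
  assumes H: "\<forall>h\<in>H. Poly_Mapping.keys h \<subseteq> {1..n}"
  shows "(monomial_ideal n (G + H) :: 'k::field mpoly set) \<subseteq>
    ideal_prod (poly_ring n) (monomial_ideal n G) (monomial_ideal n H)"
proof
  interpret cring "poly_ring n :: 'k mpoly ring" by (rule cring_poly_ring)
  fix f :: "'k mpoly" assume f: "f \<in> monomial_ideal n (G + H)"
  show "f \<in> ideal_prod (poly_ring n) (monomial_ideal n G) (monomial_ideal n H)"
  proof (rule poly_ring_ideal_memI[OF ideal_prod_is_ideal[OF ideal_monomial_ideal ideal_monomial_ideal]])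
    fix m assume m: "m \<in> Poly_Mapping.keys f"
    then obtain g h where gh: "g \<in> G" "h \<in> H" "monomial_dvd (g + h) m"
      using f unfolding monomial_ideal_def support_ideal_def by (auto elim!: set_plus_elim)
    then have h: "monomial_dvd h m" and g: "monomial_dvd g (m - h)"
      unfolding monomial_dvd_def by (auto simp: lookup_add lookup_minus intro: le_trans[OF le_add2])
        (metis add_le_imp_le_diff)
    have "Poly_Mapping.single (m - h) (Poly_Mapping.lookup f m) \<in> monomial_ideal n G"
      using f m gh(1) g poly_ring_single_diff_closed
      unfolding monomial_ideal_def support_ideal_def by auto
    moreover have "Poly_Mapping.single h 1 \<in> monomial_ideal n H"
      using H gh single_in_monomial_ideal by blast
    ultimately show "Poly_Mapping.single m (Poly_Mapping.lookup f m) \<in>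
        ideal_prod (poly_ring n) (monomial_ideal n G) (monomial_ideal n H)"
      using ideal_prod.prod single_eq_mult_single[OF h] by (metis poly_ring_simps(1))
  qed
qed

lemma ideal_prod_monomial_ideal:
  "\<forall>h\<in>H. Poly_Mapping.keys h \<subseteq> {1..n} \<Longrightarrow>
    ideal_prod (poly_ring n) (monomial_ideal n G) (monomial_ideal n H) =
    (monomial_ideal n (G + H) :: 'k::field mpoly set)"
  using ideal_prod_subset_monomial_ideal monomial_ideal_subset_ideal_prod by blast

primrec sumset_pow :: "'a::monoid_add set \<Rightarrow> nat \<Rightarrow> 'a set" where
  "sumset_pow E 0 = {0}"
| "sumset_pow E (Suc k) = E + sumset_pow E k"

lemma ideal_pow_monomial_ideal:
  assumes "\<forall>e\<in>E. Poly_Mapping.keys e \<subseteq> {1..n}"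
  shows "ideal_pow (poly_ring n) (monomial_ideal n E) k = (monomial_ideal n (sumset_pow E k) :: 'k::field mpoly set)"
proof -
  have vars: "\<forall>g\<in>sumset_pow E k. Poly_Mapping.keys g \<subseteq> {1..n}" for k
    by (induction k) (use assms Poly_Mapping.keys_add in \<open>fastforce elim!: set_plus_elim\<close>)+
  show ?thesis
  proof (induction k)
    case 0
    show ?case by (auto simp: monomial_ideal_def support_ideal_def monomial_dvd_def)
  next
    case (Suc k)
    then show ?case using ideal_prod_monomial_ideal[OF vars] by simp
  qed
qed

subsection \<open>Vertex covers of the paths of length two\<close>

definition path_monomial :: "nat \<Rightarrow> monomial" where
  "path_monomial i = Poly_Mapping.single i 1 + Poly_Mapping.single (i + 1) 1 + Poly_Mapping.single (i + 2) 1"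

lemma lookup_path_monomial:
  "Poly_Mapping.lookup (path_monomial i) v = (if v \<in> {i..i + 2} then 1 else 0)"
  by (auto simp: path_monomial_def lookup_add lookup_single when_def)

definition path_monomials :: "nat \<Rightarrow> nat \<Rightarrow> monomial set" where
  "path_monomials s n = path_monomial ` {i. s \<le> i \<and> i + 2 \<le> n}"

definition path_cover :: "nat \<Rightarrow> nat \<Rightarrow> nat set \<Rightarrow> bool" where
  "path_cover s n C \<longleftrightarrow> (\<forall>i. s \<le> i \<longrightarrow> i + 2 \<le> n \<longrightarrow> {i..i + 2} \<inter> C \<noteq> {})"

lemma sumset_pow_mono: "E \<subseteq> E' \<Longrightarrow> sumset_pow E k \<subseteq> sumset_pow E' k"
  by (induction k) (auto elim!: set_plus_elim)

lemma sumset_pow_add_copies: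
  assumes "e \<in> E" "g \<in> sumset_pow E j"
  shows "\<exists>g'\<in>sumset_pow E (c + j). \<forall>v. Poly_Mapping.lookup g' v = c * Poly_Mapping.lookup e v + Poly_Mapping.lookup g v"
proof (induction c)
  case 0
  then show ?case using assms(2) by auto
next
  case (Suc c)
  then obtain g' where "g' \<in> sumset_pow E (c + j)"
      "\<forall>v. Poly_Mapping.lookup g' v = c * Poly_Mapping.lookup e v + Poly_Mapping.lookup g v"
    by blast
  then show ?case using assms(1) by (intro bexI[of _ "e + g'"]) (auto simp: lookup_add)
qed

lemma path_cover_insert_step:
  assumes C': "path_cover (Suc s) n C'" and v0: "v0 \<in> {s..s + 2}" "\<forall>w\<in>C' \<inter> {s..s + 2}. w \<le> v0"
  shows "path_cover s n (insert v0 (C' - {s..s + 2}))"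
  unfolding path_cover_def
proof (intro allI impI)
  fix i assume i: "s \<le> i" "i + 2 \<le> n"
  show "{i..i + 2} \<inter> insert v0 (C' - {s..s + 2}) \<noteq> {}"
  proof (cases "i = s")
    case True
    then show ?thesis using v0(1) by auto
  next
    case False
    then obtain w where w: "w \<in> C'" "i \<le> w" "w \<le> i + 2"
      using C' i unfolding path_cover_def by (metis Int_emptyI Suc_leI atLeastAtMost_iff le_neq_implies_less)
    show ?thesis
    proof (cases "w \<in> {s..s + 2}")
      case True
      then have "w \<le> v0" using v0(2) w(1) by blast
      then have "v0 \<in> {i..i + 2}" using v0(1) w i \<open>i \<noteq> s\<close> by auto
      then show ?thesis by auto
    next
      case False
      then show ?thesis using w by auto
    qed
  qed
qed

lemma sumset_pow_prepend_path_monomial: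
  assumes "s + 2 \<le> n" "g \<in> sumset_pow (path_monomials (Suc s) n) j"
  shows "\<exists>g'\<in>sumset_pow (path_monomials s n) (c + j).
    \<forall>v. Poly_Mapping.lookup g' v = c * Poly_Mapping.lookup (path_monomial s) v + Poly_Mapping.lookup g v"
proof (rule sumset_pow_add_copies)
  show "path_monomial s \<in> path_monomials s n"
    using assms(1) unfolding path_monomials_def by auto
  have "path_monomials (Suc s) n \<subseteq> path_monomials s n"
    unfolding path_monomials_def by auto
  then show "g \<in> sumset_pow (path_monomials s n) j"
    using assms(2) sumset_pow_mono by blast
qed

text \<open>The greedy step: take the path starting at \<open>s\<close> as many times as its least weight \<open>c\<close>
  allows; covers of the later paths then still carry weight \<open>k - c\<close> of what remains.\<close>

lemma path_cover_bound_step: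
  fixes a :: "nat \<Rightarrow> nat"
  assumes bound: "\<And>C. finite C \<Longrightarrow> path_cover s n C \<Longrightarrow> k \<le> (\<Sum>v\<in>C. a v)"
    and c_le: "\<And>v. v \<in> {s..s + 2} \<Longrightarrow> c \<le> a v"
    and c_attained: "\<exists>v\<in>{s..s + 2}. a v = c"
    and C': "finite C'" "path_cover (Suc s) n C'"
  shows "k \<le> c + (\<Sum>v\<in>C'. a v - c * Poly_Mapping.lookup (path_monomial s) v)"
proof -
  let ?W = "{s..s + 2}"
  define a' where "a' v = a v - c * Poly_Mapping.lookup (path_monomial s) v" for v
  have a_in: "a v = a' v + c" if "v \<in> ?W" for v
    using c_le[OF that] that by (simp add: a'_def lookup_path_monomial)
  have a_out: "a v = a' v" if "v \<notin> ?W" for v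
    using that by (auto simp: a'_def lookup_path_monomial)
  obtain v0 where v0: "v0 \<in> ?W" "v0 \<in> C' \<or> a v0 = c" "\<forall>w\<in>C' \<inter> ?W. w \<le> v0"
  proof (cases "C' \<inter> ?W = {}")
    case True
    then show ?thesis using c_attained that by blast
  next
    case False
    then show ?thesis using that[of "Max (C' \<inter> ?W)"] Max_in[of "C' \<inter> ?W"] C'(1) by auto
  qed
  have "k \<le> (\<Sum>v\<in>insert v0 (C' - ?W). a v)"
    using bound C'(1) path_cover_insert_step[OF C'(2) v0(1,3)] by simp
  also have "\<dots> = a v0 + (\<Sum>v\<in>C' - ?W. a v)"
    using C'(1) v0(1) by simp
  also have "(\<Sum>v\<in>C' - ?W. a v) = (\<Sum>v\<in>C' - ?W. a' v)"
    by (rule sum.cong) (simp_all add: a_out)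
  finally have k_le: "k \<le> c + (a' v0 + (\<Sum>v\<in>C' - ?W. a' v))"
    using a_in[OF v0(1)] by simp
  have "a' v0 + (\<Sum>v\<in>C' - ?W. a' v) \<le> (\<Sum>v\<in>C'. a' v)"
  proof (cases "v0 \<in> C'")
    case True
    then have "a' v0 + (\<Sum>v\<in>C' - ?W. a' v) = (\<Sum>v\<in>insert v0 (C' - ?W). a' v)"
      using C'(1) v0(1) by simp
    also have "\<dots> \<le> (\<Sum>v\<in>C'. a' v)" using C'(1) True by (intro sum_mono2) auto
    finally show ?thesis .
  next
    case False
    then have "a' v0 = 0" using v0(1,2) a_in[OF v0(1)] by simp
    then show ?thesis using C'(1) by (simp add: sum_mono2)
  qed
  with k_le show ?thesis unfolding a'_def by linarith
qed

lemma exists_path_sum_below: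
  fixes a :: "nat \<Rightarrow> nat"
  assumes "\<And>C. finite C \<Longrightarrow> path_cover s n C \<Longrightarrow> k \<le> (\<Sum>v\<in>C. a v)"
  shows "\<exists>g\<in>sumset_pow (path_monomials s n) k. \<forall>v. Poly_Mapping.lookup g v \<le> a v"
  using assms
proof (induction "n - s" arbitrary: s a k rule: less_induct)
  case less
  show ?case
  proof (cases "s + 2 \<le> n")
    case False
    then have "path_cover s n {}" by (auto simp: path_cover_def)
    then have "k = 0" using less.prems[of "{}"] by simp
    then show ?thesis by simp
  next
    case True
    define c where "c = Min (a ` {s..s + 2})"
    have c_le: "c \<le> a v" if "v \<in> {s..s + 2}" for v
      unfolding c_def using that by simp
    have "c \<in> a ` {s..s + 2}"
      unfolding c_def by (rule Min_in) auto
    then have c_attained: "\<exists>v\<in>{s..s + 2}. a v = c" by auto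
    define c' where "c' = min c k"
    define a' where "a' v = a v - c' * Poly_Mapping.lookup (path_monomial s) v" for v
    have bound': "k - c' \<le> (\<Sum>v\<in>C'. a' v)" if "finite C'" "path_cover (Suc s) n C'" for C'
    proof (cases "c \<le> k")
      case True
      then show ?thesis
        using path_cover_bound_step[OF less.prems c_le c_attained that] by (simp add: a'_def c'_def)
    qed (simp add: c'_def)
    have "n - Suc s < n - s" using True by simp
    from less.hyps[OF this bound'] obtain g' where
      g': "g' \<in> sumset_pow (path_monomials (Suc s) n) (k - c')" "\<forall>v. Poly_Mapping.lookup g' v \<le> a' v"
      by blast
    obtain g where g: "g \<in> sumset_pow (path_monomials s n) (c' + (k - c'))"
        "\<forall>v. Poly_Mapping.lookup g v = c' * Poly_Mapping.lookup (path_monomial s) v + Poly_Mapping.lookup g' v"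
      using sumset_pow_prepend_path_monomial[OF True g'(1)] by blast
    have "Poly_Mapping.lookup g v \<le> a v" for v
    proof -
      have "c' * Poly_Mapping.lookup (path_monomial s) v \<le> a v"
        using c_le[of v] by (auto simp: c'_def lookup_path_monomial)
      then show ?thesis using g(2)[rule_format, of v] g'(2)[rule_format, of v] unfolding a'_def by linarith
    qed
    moreover have "c' + (k - c') = k" by (simp add: c'_def)
    ultimately show ?thesis using g(1) by auto
  qed
qed

definition minimal_path_covers :: "nat \<Rightarrow> nat set set" where
  "minimal_path_covers n = {C. C \<subseteq> {1..n} \<and> path_cover 1 n C \<and> (\<forall>C'. C' \<subset> C \<longrightarrow> \<not> path_cover 1 n C')}"

lemma finite_minimal_path_covers: "finite (minimal_path_covers n)"
  by (rule finite_subset[of _ "Pow {1..n}"]) (auto simp: minimal_path_covers_def)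

lemma finite_minimal_path_cover: "C \<in> minimal_path_covers n \<Longrightarrow> finite C"
  unfolding minimal_path_covers_def by (auto intro: finite_subset)

lemma exists_minimal_path_cover_subset:
  assumes "path_cover 1 n C"
  shows "\<exists>B\<in>minimal_path_covers n. B \<subseteq> C"
proof -
  let ?S = "{B. B \<subseteq> C \<inter> {1..n} \<and> path_cover 1 n B}"
  have "path_cover 1 n (C \<inter> {1..n})"
    unfolding path_cover_def
  proof (intro allI impI)
    fix i assume "1 \<le> i" "i + 2 \<le> n"
    moreover from this have "{i..i + 2} \<inter> (C \<inter> {1..n}) = {i..i + 2} \<inter> C" by auto
    ultimately show "{i..i + 2} \<inter> (C \<inter> {1..n}) \<noteq> {}"
      using assms unfolding path_cover_def by simp
  qed
  then have "C \<inter> {1..n} \<in> ?S" by simp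
  moreover have "finite ?S" by (rule finite_subset[of _ "Pow {1..n}"]) auto
  ultimately obtain B where "B \<in> ?S" "\<not> (\<exists>B'\<in>?S. B' < B)"
    using ex_min_if_finite[of ?S] by blast
  moreover from this have "B \<in> minimal_path_covers n"
    unfolding minimal_path_covers_def by (auto simp: less_le_not_le)
  ultimately show ?thesis by auto
qed

definition degree_in :: "nat set \<Rightarrow> monomial \<Rightarrow> nat" where
  "degree_in C m = (\<Sum>i\<in>C. Poly_Mapping.lookup m i)"

lemma degree_in_add: "degree_in C (m + m') = degree_in C m + degree_in C m'"
  unfolding degree_in_def by (simp add: lookup_add sum.distrib)

lemma degree_in_mono: "monomial_dvd g m \<Longrightarrow> degree_in C g \<le> degree_in C m"
  unfolding degree_in_def monomial_dvd_def by (rule sum_mono) auto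

lemma degree_in_pos_iff: "finite C \<Longrightarrow> 0 < degree_in C m \<longleftrightarrow> (\<exists>i\<in>C. 0 < Poly_Mapping.lookup m i)"
  unfolding degree_in_def neq0_conv[symmetric] by (simp add: sum_eq_0_iff)

lemma degree_in_sumset_pow:
  assumes "finite C" "path_cover 1 n C"
  shows "g \<in> sumset_pow (path_monomials 1 n) k \<Longrightarrow> k \<le> degree_in C g"
proof (induction k arbitrary: g)
  case (Suc k)
  then obtain e h where g: "g = e + h" "e \<in> path_monomials 1 n" "h \<in> sumset_pow (path_monomials 1 n) k"
    by (auto elim: set_plus_elim)
  then obtain i where i: "e = path_monomial i" "1 \<le> i" "i + 2 \<le> n"
    unfolding path_monomials_def by blast
  then obtain v where "v \<in> C" "v \<in> {i..i + 2}"
    using assms(2) unfolding path_cover_def by blast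
  then have "0 < degree_in C e"
    using assms(1) i(1) by (auto simp: degree_in_pos_iff lookup_path_monomial)
  then show ?case using Suc.IH[OF g(3)] g(1) by (simp add: degree_in_add)
qed simp

lemma path_sum_dvd_iff:
  "(\<exists>g\<in>sumset_pow (path_monomials 1 n) k. monomial_dvd g m) \<longleftrightarrow>
    (\<forall>C\<in>minimal_path_covers n. k \<le> degree_in C m)"
proof
  assume "\<exists>g\<in>sumset_pow (path_monomials 1 n) k. monomial_dvd g m"
  then obtain g where g: "g \<in> sumset_pow (path_monomials 1 n) k" "monomial_dvd g m" by blast
  show "\<forall>C\<in>minimal_path_covers n. k \<le> degree_in C m"
  proof
    fix C assume C: "C \<in> minimal_path_covers n"
    then have "finite C" "path_cover 1 n C"
      using finite_minimal_path_cover unfolding minimal_path_covers_def by auto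
    then have "k \<le> degree_in C g" using g(1) by (rule degree_in_sumset_pow)
    also have "\<dots> \<le> degree_in C m" using g(2) by (rule degree_in_mono)
    finally show "k \<le> degree_in C m" .
  qed
next
  assume H: "\<forall>C\<in>minimal_path_covers n. k \<le> degree_in C m"
  have "k \<le> (\<Sum>v\<in>C. Poly_Mapping.lookup m v)" if C: "finite C" "path_cover 1 n C" for C
  proof -
    obtain B where "B \<in> minimal_path_covers n" "B \<subseteq> C"
      using exists_minimal_path_cover_subset[OF C(2)] by blast
    then have "k \<le> degree_in B m" using H by blast
    also have "\<dots> \<le> (\<Sum>v\<in>C. Poly_Mapping.lookup m v)"
      unfolding degree_in_def using C(1) \<open>B \<subseteq> C\<close> by (rule sum_mono2) simp
    finally show ?thesis .
  qed
  then show "\<exists>g\<in>sumset_pow (path_monomials 1 n) k. monomial_dvd g m"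
    using exists_path_sum_below unfolding monomial_dvd_def by blast
qed

subsection \<open>Powers of monomial primes\<close>

text \<open>\<open>degree_ideal n C k\<close> is \<open>P\<^sub>C\<^sup>k\<close>, the \<open>k\<close>-th power of the prime generated by the variables in \<open>C\<close>.\<close>

definition degree_ideal :: "nat \<Rightarrow> nat set \<Rightarrow> nat \<Rightarrow> 'k::field mpoly set" where
  "degree_ideal n C k = support_ideal n (\<lambda>m. k \<le> degree_in C m)"

lemma ideal_degree_ideal: "ideal (degree_ideal n C k :: 'k::field mpoly set) (poly_ring n)"
  unfolding degree_ideal_def by (rule ideal_support_ideal) (simp add: degree_in_add)

lemma one_notin_degree_ideal: "1 \<notin> degree_ideal n C 1"
  by (simp add: degree_ideal_def support_ideal_def degree_in_def)

lemma degree_in_keys_mult: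
  assumes "\<forall>m\<in>Poly_Mapping.keys p. A \<le> degree_in C m" "\<forall>m\<in>Poly_Mapping.keys q. B \<le> degree_in C m"
  shows "\<forall>m\<in>Poly_Mapping.keys (p * q). A + B \<le> degree_in C m"
proof
  fix m assume "m \<in> Poly_Mapping.keys (p * q)"
  then obtain a b where "m = a + b" "a \<in> Poly_Mapping.keys p" "b \<in> Poly_Mapping.keys q"
    using Poly_Mapping.keys_mult[of p q] by blast
  then show "A + B \<le> degree_in C m" using assms by (auto simp: degree_in_add intro: add_mono)
qed

definition restrict_support :: "(monomial \<Rightarrow> bool) \<Rightarrow> 'k::zero mpoly \<Rightarrow> 'k mpoly" where
  "restrict_support P f = Abs_poly_mapping (\<lambda>m. if P m then Poly_Mapping.lookup f m else 0)"

lemma lookup_restrict_support: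
  "Poly_Mapping.lookup (restrict_support P f) m = (if P m then Poly_Mapping.lookup f m else 0)"
proof -
  have "{m. (if P m then Poly_Mapping.lookup f m else 0) \<noteq> 0} \<subseteq> Poly_Mapping.keys f"
    by (auto simp: in_keys_iff split: if_splits)
  then have "finite {m. (if P m then Poly_Mapping.lookup f m else 0) \<noteq> 0}"
    using finite_subset finite_keys by blast
  then show ?thesis unfolding restrict_support_def by simp
qed

lemma keys_restrict_support:
  "Poly_Mapping.keys (restrict_support P f) = {m \<in> Poly_Mapping.keys f. P m}"
  by (auto simp: in_keys_iff lookup_restrict_support split: if_splits)

lemma restrict_support_split:
  "f = restrict_support P f + restrict_support (\<lambda>m. \<not> P m) (f :: 'k::monoid_add mpoly)"
  by (rule poly_mapping_eqI) (simp add: lookup_add lookup_restrict_support)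

text \<open>The degree in the variables of \<open>C\<close> is a valuation: the parts of \<open>f\<close> and \<open>g\<close> of lowest
  degree have a nonzero product, and all other products have higher degree.\<close>

lemma degree_in_mult_min:
  fixes f g :: "'k::idom mpoly" and C :: "nat set"
  assumes "f \<noteq> 0" "g \<noteq> 0"
  defines "d1 \<equiv> Min (degree_in C ` Poly_Mapping.keys f)" and "d2 \<equiv> Min (degree_in C ` Poly_Mapping.keys g)"
  shows "\<exists>m\<in>Poly_Mapping.keys (f * g). degree_in C m = d1 + d2"
proof -
  have f_ge: "\<forall>m\<in>Poly_Mapping.keys f. d1 \<le> degree_in C m" and g_ge: "\<forall>m\<in>Poly_Mapping.keys g. d2 \<le> degree_in C m"
    unfolding d1_def d2_def by simp_all
  define f0 where "f0 = restrict_support (\<lambda>m. degree_in C m = d1) f"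
  define f1 where "f1 = restrict_support (\<lambda>m. degree_in C m \<noteq> d1) f"
  define g0 where "g0 = restrict_support (\<lambda>m. degree_in C m = d2) g"
  define g1 where "g1 = restrict_support (\<lambda>m. degree_in C m \<noteq> d2) g"
  have "d1 \<in> degree_in C ` Poly_Mapping.keys f" "d2 \<in> degree_in C ` Poly_Mapping.keys g"
    unfolding d1_def d2_def using assms(1,2) by (auto intro!: Min_in)
  then have "f0 \<noteq> 0" "g0 \<noteq> 0"
    unfolding f0_def g0_def by (auto simp flip: keys_eq_empty simp: keys_restrict_support)
  then obtain m where m: "m \<in> Poly_Mapping.keys (f0 * g0)"
    by (metis keys_eq_empty ex_in_conv no_zero_divisors)
  have f0_eq: "\<forall>m\<in>Poly_Mapping.keys f0. degree_in C m = d1"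
    and g0_eq: "\<forall>m\<in>Poly_Mapping.keys g0. degree_in C m = d2"
    unfolding f0_def g0_def by (simp_all add: keys_restrict_support)
  obtain a b where "m = a + b" "a \<in> Poly_Mapping.keys f0" "b \<in> Poly_Mapping.keys g0"
    using Poly_Mapping.keys_mult[of f0 g0] m by blast
  then have m_deg: "degree_in C m = d1 + d2" using f0_eq g0_eq by (simp add: degree_in_add)
  have "\<forall>m\<in>Poly_Mapping.keys f1. Suc d1 \<le> degree_in C m" "\<forall>m\<in>Poly_Mapping.keys g1. Suc d2 \<le> degree_in C m"
    using f_ge g_ge unfolding f1_def g1_def by (auto simp: keys_restrict_support Suc_le_eq)
  moreover have "\<forall>m\<in>Poly_Mapping.keys f0. d1 \<le> degree_in C m" using f0_eq by simp
  ultimately have rest: "\<forall>m\<in>Poly_Mapping.keys (f0 * g1 + f1 * g). Suc (d1 + d2) \<le> degree_in C m"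
    using degree_in_keys_mult[of f0 d1 C g1 "Suc d2"] degree_in_keys_mult[of f1 "Suc d1" C g d2] g_ge
      Poly_Mapping.keys_add[of "f0 * g1" "f1 * g"] by fastforce
  have "f * g = f0 * g0 + (f0 * g1 + f1 * g)"
    using restrict_support_split[of f "\<lambda>m. degree_in C m = d1"] restrict_support_split[of g "\<lambda>m. degree_in C m = d2"]
    unfolding f0_def f1_def g0_def g1_def by (metis (no_types, lifting) add.assoc distrib_left distrib_right)
  moreover have "m \<notin> Poly_Mapping.keys (f0 * g1 + f1 * g)" using rest m_deg by fastforce
  ultimately show ?thesis
    using m m_deg by (intro bexI[of _ m]) (auto simp: in_keys_iff lookup_add)
qed

lemma degree_ideal_mult_cancel:
  assumes r: "r \<in> carrier (poly_ring n)" "r \<notin> degree_ideal n C 1"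
    and x: "x \<in> carrier (poly_ring n)" and rx: "r * x \<in> (degree_ideal n C k :: 'k::field mpoly set)"
  shows "x \<in> degree_ideal n C k"
proof (rule ccontr)
  assume "x \<notin> degree_ideal n C k"
  then obtain m2 where m2: "m2 \<in> Poly_Mapping.keys x" "degree_in C m2 < k"
    using x unfolding degree_ideal_def support_ideal_def by force
  then have "Min (degree_in C ` Poly_Mapping.keys x) \<le> degree_in C m2" by simp
  with m2(2) have x_min: "Min (degree_in C ` Poly_Mapping.keys x) < k" by linarith
  obtain m1 where m1: "m1 \<in> Poly_Mapping.keys r" "degree_in C m1 = 0"
    using r unfolding degree_ideal_def support_ideal_def by force
  have "Min (degree_in C ` Poly_Mapping.keys r) \<le> degree_in C m1" using m1(1) by simp
  with m1(2) have r_min: "Min (degree_in C ` Poly_Mapping.keys r) = 0" by linarith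
  have "r \<noteq> 0" "x \<noteq> 0" using m1(1) m2(1) by auto
  then obtain m where "m \<in> Poly_Mapping.keys (r * x)"
      "degree_in C m = Min (degree_in C ` Poly_Mapping.keys r) + Min (degree_in C ` Poly_Mapping.keys x)"
    by (blast dest: degree_in_mult_min)
  with r_min x_min rx show False unfolding degree_ideal_def support_ideal_def by auto
qed

lemma primeideal_degree_ideal: "primeideal (degree_ideal n C 1 :: 'k::field mpoly set) (poly_ring n)"
proof (rule primeidealI[OF ideal_degree_ideal cring_poly_ring])
  show "carrier (poly_ring n) \<noteq> (degree_ideal n C 1 :: 'k mpoly set)"
    using one_notin_degree_ideal poly_ring_one_closed by metis
  fix a b :: "'k mpoly"
  assume "a \<in> carrier (poly_ring n)" "b \<in> carrier (poly_ring n)" "a \<otimes>\<^bsub>poly_ring n\<^esub> b \<in> degree_ideal n C 1"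
  then show "a \<in> degree_ideal n C 1 \<or> b \<in> degree_ideal n C 1"
    using degree_ideal_mult_cancel by fastforce
qed

lemma var_power: "var i ^ k = Poly_Mapping.single (Poly_Mapping.single i k) 1"
  by (induction k) (simp_all add: var_def mult_single flip: single_add)

lemma var_power_mult_in_degree_ideal:
  assumes "finite C" "i \<in> C" "i \<in> {1..n}" "x \<in> carrier (poly_ring n)"
  shows "var i ^ k * x \<in> (degree_ideal n C k :: 'k::field mpoly set)"
proof -
  have "\<forall>m\<in>Poly_Mapping.keys (var i ^ k :: 'k mpoly). k \<le> degree_in C m"
    using assms(1,2) by (simp add: var_power degree_in_def lookup_single when_def sum.delta)
  then have "\<forall>m\<in>Poly_Mapping.keys (var i ^ k * x). k + 0 \<le> degree_in C m"
    by (rule degree_in_keys_mult) simp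
  moreover have "var i ^ k * x \<in> carrier (poly_ring n)"
    using assms(3,4) by (simp add: var_power poly_ring_mult_closed poly_ring_single_closed)
  ultimately show ?thesis unfolding degree_ideal_def support_ideal_def by simp
qed

lemma degree_ideal_subset:
  assumes J: "ideal J (poly_ring n :: 'k::field mpoly ring)"
    and C: "finite C" "\<And>i. i \<in> C \<Longrightarrow> var i \<in> J"
  shows "degree_ideal n C 1 \<subseteq> J"
proof
  fix f :: "'k mpoly" assume f: "f \<in> degree_ideal n C 1"
  show "f \<in> J"
  proof (rule poly_ring_ideal_memI[OF J])
    fix m assume m: "m \<in> Poly_Mapping.keys f"
    then have "0 < degree_in C m" using f unfolding degree_ideal_def support_ideal_def by auto
    then obtain i where i: "i \<in> C" "0 < Poly_Mapping.lookup m i" using degree_in_pos_iff C(1) by blast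
    then have "monomial_dvd (Poly_Mapping.single i 1) m"
      unfolding monomial_dvd_def by (simp add: lookup_single when_def)
    moreover have "Poly_Mapping.single (m - Poly_Mapping.single i 1) (Poly_Mapping.lookup f m) \<in> carrier (poly_ring n)"
      using f m poly_ring_single_diff_closed unfolding degree_ideal_def support_ideal_def by blast
    ultimately show "Poly_Mapping.single m (Poly_Mapping.lookup f m) \<in> J"
      using ideal.I_l_closed[OF J C(2)[OF i(1)]] by (simp add: var_def single_eq_mult_single)
  qed
qed

subsection \<open>The powers of the path ideal\<close>

lemma path_monomials_vars: "\<forall>e\<in>path_monomials 1 n. Poly_Mapping.keys e \<subseteq> {1..n}"
proof
  fix e assume "e \<in> path_monomials 1 n"
  then obtain i where "e = path_monomial i" "1 \<le> i" "i + 2 \<le> n" unfolding path_monomials_def by blast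
  then show "Poly_Mapping.keys e \<subseteq> {1..n}"
    by (auto simp: in_keys_iff lookup_path_monomial split: if_splits)
qed

lemma path_ideal_eq_monomial_ideal:
  "path_ideal n = (monomial_ideal n (path_monomials 1 n) :: 'k::field mpoly set)"
proof -
  have "{var i * var (i + 1) * var (i + 2) | i. 1 \<le> i \<and> i \<le> n - 2} =
      (\<lambda>g. Poly_Mapping.single g (1::'k)) ` path_monomials 1 n"
    by (force simp: path_monomials_def path_monomial_def var_def mult_single)
  then show ?thesis
    unfolding path_ideal_def using genideal_eq_monomial_ideal[OF path_monomials_vars] by metis
qed

lemma path_ideal_pow_eq:
  "ideal_pow (poly_ring n) (path_ideal n) k =
    {f \<in> carrier (poly_ring n). \<forall>C\<in>minimal_path_covers n. f \<in> (degree_ideal n C k :: 'k::field mpoly set)}"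
proof -
  have "ideal_pow (poly_ring n) (path_ideal n) k =
      (monomial_ideal n (sumset_pow (path_monomials 1 n) k) :: 'k mpoly set)"
    unfolding path_ideal_eq_monomial_ideal by (rule ideal_pow_monomial_ideal[OF path_monomials_vars])
  then show ?thesis
    unfolding monomial_ideal_def degree_ideal_def support_ideal_def path_sum_dvd_iff by blast
qed

subsection \<open>Associated primes\<close>

lemma (in primeideal) nat_pow_mem_imp_mem:
  assumes "a \<in> carrier R" "a [^] Suc k \<in> I"
  shows "a \<in> I"
  using assms(2)
proof (induction k)
  case (Suc k)
  then show ?case using I_prime[OF nat_pow_closed[OF assms(1)] assms(1), of "Suc k"] by auto
qed (simp add: assms(1))

text \<open>If no single colon \<open>(Q C : x)\<close> equals \<open>P\<close>, each contains an element outside \<open>P\<close>; the product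
  of these lies in the colon of the intersection, which is \<open>P\<close>, but not in the prime \<open>P\<close>.\<close>

lemma (in cring) primeideal_colon_Inter:
  assumes P: "primeideal P R" and F: "finite F"
    and Q: "\<And>C. C \<in> F \<Longrightarrow> ideal (Q C) R" and x: "x \<in> carrier R"
    and P_eq: "P = {r \<in> carrier R. \<forall>C\<in>F. r \<otimes> x \<in> Q C}"
  shows "\<exists>C\<in>F. P = {r \<in> carrier R. r \<otimes> x \<in> Q C}"
proof (rule ccontr)
  assume "\<not> ?thesis"
  then have witness: "\<exists>r\<in>carrier R - P. r \<otimes> x \<in> Q C" if "C \<in> F" for C
    using that P_eq by blast
  have "\<exists>r\<in>carrier R - P. \<forall>C\<in>F'. r \<otimes> x \<in> Q C" if "F' \<subseteq> F" for F'
    using finite_subset[OF that F] that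
  proof (induction F' rule: finite_induct)
    case empty
    have "\<one> \<notin> P"
      using P ideal.one_imp_carrier primeideal.I_notcarr primeideal.axioms(1) by metis
    then show ?case by auto
  next
    case (insert C F')
    obtain r where r: "r \<in> carrier R - P" "\<forall>C'\<in>F'. r \<otimes> x \<in> Q C'"
      using insert by blast
    obtain s where s: "s \<in> carrier R - P" "s \<otimes> x \<in> Q C"
      using witness insert.prems by blast
    have "s \<otimes> r \<notin> P" using primeideal.I_prime[OF P] r(1) s(1) by blast
    moreover have "(s \<otimes> r) \<otimes> x \<in> Q C'" if "C' \<in> insert C F'" for C'
    proof (cases "C' = C")
      case True
      have "(s \<otimes> r) \<otimes> x = r \<otimes> (s \<otimes> x)" using r s x by (simp add: m_ac)
      then show ?thesis using True ideal.I_l_closed[OF Q s(2)] r(1) insert.prems by force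
    next
      case False
      have "(s \<otimes> r) \<otimes> x = s \<otimes> (r \<otimes> x)" using r s x by (simp add: m_assoc)
      then show ?thesis using False ideal.I_l_closed[OF Q] r(2) s(1) that insert.prems by auto
    qed
    ultimately show ?case using r(1) s(1) by blast
  qed
  then obtain r where "r \<in> carrier R - P" "\<forall>C\<in>F. r \<otimes> x \<in> Q C" by blast
  then show False using P_eq by blast
qed

text \<open>Since \<open>degree_ideal n C k\<close> is primary, the only prime among its colon ideals is its radical.\<close>

lemma prime_colon_degree_ideal_eq:
  assumes P: "primeideal P (poly_ring n :: 'k::field mpoly ring)"
    and C: "finite C" "C \<subseteq> {1..n}" and x: "x \<in> carrier (poly_ring n)"
    and P_eq: "P = {r \<in> carrier (poly_ring n). r * x \<in> degree_ideal n C k}"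
  shows "P = degree_ideal n C 1"
proof -
  interpret primeideal P "poly_ring n :: 'k mpoly ring" by fact
  have P_mem: "r \<in> P \<longleftrightarrow> r \<in> carrier (poly_ring n) \<and> r * x \<in> degree_ideal n C k" for r
    using P_eq by blast
  have "1 \<notin> P" using I_notcarr one_imp_carrier by auto
  then have x_notin: "x \<notin> degree_ideal n C k" by (simp add: P_mem)
  have "P \<subseteq> degree_ideal n C 1"
  proof
    fix r assume "r \<in> P"
    then have r: "r \<in> carrier (poly_ring n)" "r * x \<in> degree_ideal n C k" by (simp_all add: P_mem)
    show "r \<in> degree_ideal n C 1"
      using degree_ideal_mult_cancel[OF r(1) _ x r(2)] x_notin by blast
  qed
  moreover have "degree_ideal n C 1 \<subseteq> P"
  proof (rule degree_ideal_subset[OF is_ideal C(1)])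
    fix i assume "i \<in> C"
    then have i: "i \<in> {1..n}" using C(2) by blast
    obtain k' where k: "k = Suc k'"
      using x_notin x by (cases k) (auto simp: degree_ideal_def support_ideal_def)
    have "(var i :: 'k mpoly) ^ k \<in> carrier (poly_ring n)"
      using nat_pow_closed[OF var_closed[OF i]] by (simp add: poly_ring_nat_pow)
    moreover have "var i ^ k * x \<in> degree_ideal n C k"
      using var_power_mult_in_degree_ideal[OF C(1) \<open>i \<in> C\<close> i x] .
    ultimately have "var i ^ k \<in> P" by (simp add: P_mem)
    then have "var i [^]\<^bsub>poly_ring n\<^esub> Suc k' \<in> P" using k by (simp only: poly_ring_nat_pow)
    then show "var i \<in> P" using nat_pow_mem_imp_mem[OF var_closed[OF i]] by blast
  qed
  ultimately show ?thesis by blast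
qed

lemma keys_mult_single_one:
  "Poly_Mapping.keys (p * Poly_Mapping.single u 1) = (\<lambda>m. m + u) ` Poly_Mapping.keys (p :: 'k::semiring_1 mpoly)"
proof
  show "Poly_Mapping.keys (p * Poly_Mapping.single u 1) \<subseteq> (\<lambda>m. m + u) ` Poly_Mapping.keys p"
    using Poly_Mapping.keys_mult[of p "Poly_Mapping.single u 1"] by auto
  have "p * Poly_Mapping.single u 1 =
      (\<Sum>a\<in>Poly_Mapping.keys p. Poly_Mapping.single (a + u) (Poly_Mapping.lookup p a))"
    by (subst poly_mapping_sum_singles[of p]) (simp add: sum_distrib_right mult_single)
  then have "Poly_Mapping.lookup (p * Poly_Mapping.single u 1) (m + u) = Poly_Mapping.lookup p m" for m
    by (simp add: lookup_sum lookup_single when_def sum.delta in_keys_iff)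
  then show "(\<lambda>m. m + u) ` Poly_Mapping.keys p \<subseteq> Poly_Mapping.keys (p * Poly_Mapping.single u 1)"
    by (auto simp: in_keys_iff)
qed

text \<open>For a minimal cover \<open>C\<close>, multiplying by the product \<open>u\<close> of the variables outside \<open>C\<close> turns
  every monomial involving a variable \<open>i \<in> C\<close> into a multiple of a path: one that meets \<open>C\<close> only
  in \<open>i\<close>, which exists by minimality.\<close>

lemma path_monomial_dvd_add_complement_iff:
  assumes C: "C \<in> minimal_path_covers n"
  defines "u \<equiv> \<Sum>j\<in>{1..n} - C. Poly_Mapping.single j 1"
  shows "(\<exists>e\<in>path_monomials 1 n. monomial_dvd e (m + u)) \<longleftrightarrow> 0 < degree_in C m"
proof -
  have lookup_u: "Poly_Mapping.lookup u v = (if v \<in> {1..n} - C then 1 else 0)" for v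
    unfolding u_def by (simp add: lookup_sum lookup_single when_def sum.delta' del: Diff_iff)
  have C_props: "finite C" "path_cover 1 n C" "\<And>C'. C' \<subset> C \<Longrightarrow> \<not> path_cover 1 n C'"
    using C finite_minimal_path_cover unfolding minimal_path_covers_def by auto
  show ?thesis
  proof
    assume "\<exists>e\<in>path_monomials 1 n. monomial_dvd e (m + u)"
    then obtain j where j: "1 \<le> j" "j + 2 \<le> n" "monomial_dvd (path_monomial j) (m + u)"
      unfolding path_monomials_def by blast
    then obtain v where v: "v \<in> C" "v \<in> {j..j + 2}"
      using C_props(2) unfolding path_cover_def by blast
    then have "0 < Poly_Mapping.lookup m v"
      using j(3) unfolding monomial_dvd_def
      by (metis add.right_neutral lookup_add lookup_path_monomial lookup_u DiffD2 zero_less_one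
          order_less_le_trans)
    then show "0 < degree_in C m" using v(1) C_props(1) degree_in_pos_iff by blast
  next
    assume "0 < degree_in C m"
    then obtain i where i: "i \<in> C" "0 < Poly_Mapping.lookup m i"
      using C_props(1) degree_in_pos_iff by blast
    then have "\<not> path_cover 1 n (C - {i})" using C_props(3) by blast
    then obtain j where j: "1 \<le> j" "j + 2 \<le> n" "{j..j + 2} \<inter> (C - {i}) = {}"
      unfolding path_cover_def by blast
    have "monomial_dvd (path_monomial j) (m + u)"
      unfolding monomial_dvd_def lookup_add lookup_path_monomial lookup_u using i j by auto
    moreover have "path_monomial j \<in> path_monomials 1 n" using j unfolding path_monomials_def by blast
    ultimately show "\<exists>e\<in>path_monomials 1 n. monomial_dvd e (m + u)" by blast
  qed
qed

lemma degree_ideal_in_ass: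
  assumes C: "C \<in> minimal_path_covers n"
  shows "(degree_ideal n C 1 :: 'k::field mpoly set) \<in> ass (poly_ring n) (monomial_ideal n (path_monomials 1 n))"
proof -
  define u where "u = (\<Sum>j\<in>{1..n} - C. Poly_Mapping.single j (1::nat))"
  have "Poly_Mapping.keys u \<subseteq> {1..n}"
    unfolding u_def using keys_sum[of "\<lambda>j. Poly_Mapping.single j (1::nat)" "{1..n} - C"] by auto
  then have u: "(Poly_Mapping.single u 1 :: 'k mpoly) \<in> carrier (poly_ring n)"
    by (rule poly_ring_single_closed)
  have colon_iff: "r * Poly_Mapping.single u 1 \<in> monomial_ideal n (path_monomials 1 n) \<longleftrightarrow> r \<in> degree_ideal n C 1"
    if r: "r \<in> carrier (poly_ring n)" for r :: "'k mpoly"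
  proof -
    have "r * Poly_Mapping.single u 1 \<in> monomial_ideal n (path_monomials 1 n) \<longleftrightarrow>
        (\<forall>m\<in>Poly_Mapping.keys r. \<exists>e\<in>path_monomials 1 n. monomial_dvd e (m + u))"
      using poly_ring_mult_closed[OF r u]
      by (simp add: monomial_ideal_def support_ideal_def keys_mult_single_one)
    also have "\<dots> \<longleftrightarrow> (\<forall>m\<in>Poly_Mapping.keys r. 0 < degree_in C m)"
      unfolding u_def path_monomial_dvd_add_complement_iff[OF C] ..
    also have "\<dots> \<longleftrightarrow> r \<in> degree_ideal n C 1"
      using r by (simp add: degree_ideal_def support_ideal_def Suc_le_eq)
    finally show ?thesis .
  qed
  have "(degree_ideal n C 1 :: 'k mpoly set) \<subseteq> carrier (poly_ring n)"
    by (auto simp: degree_ideal_def support_ideal_def)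
  then have "r \<in> degree_ideal n C 1 \<longleftrightarrow>
      r \<in> carrier (poly_ring n) \<and> r * Poly_Mapping.single u 1 \<in> monomial_ideal n (path_monomials 1 n)" for r :: "'k mpoly"
    using colon_iff[of r] by blast
  then have "(degree_ideal n C 1 :: 'k mpoly set) = {r \<in> carrier (poly_ring n).
      r \<otimes>\<^bsub>poly_ring n\<^esub> Poly_Mapping.single u 1 \<in> monomial_ideal n (path_monomials 1 n)}"
    by auto
  with u show ?thesis
    unfolding ass_def by (intro CollectI conjI primeideal_degree_ideal bexI)
qed

theorem corollary2p4:
  fixes n :: nat
  assumes "n \<ge> 3"
  shows "normally_torsion_free (poly_ring n :: ((nat \<Rightarrow>\<^sub>0 nat) \<Rightarrow>\<^sub>0 'k::field) ring)
           (path_ideal n)"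
  unfolding normally_torsion_free_def
proof (intro allI impI subsetI)
  fix k P assume "P \<in> ass (poly_ring n :: 'k mpoly ring) (ideal_pow (poly_ring n) (path_ideal n) k)"
  then obtain x where x: "x \<in> carrier (poly_ring n)" and P: "primeideal P (poly_ring n)"
    and P_eq: "P = {r \<in> carrier (poly_ring n). r * x \<in> ideal_pow (poly_ring n) (path_ideal n) k}"
    unfolding ass_def by auto
  have "P = {r \<in> carrier (poly_ring n).
      \<forall>C\<in>minimal_path_covers n. r \<otimes>\<^bsub>poly_ring n\<^esub> x \<in> degree_ideal n C k}"
    unfolding P_eq path_ideal_pow_eq using x by (auto simp: poly_ring_mult_closed)
  then obtain C where C: "C \<in> minimal_path_covers n"
    and "P = {r \<in> carrier (poly_ring n). r \<otimes>\<^bsub>poly_ring n\<^esub> x \<in> degree_ideal n C k}"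
    using cring.primeideal_colon_Inter[where Q = "\<lambda>C. degree_ideal n C k",
        OF cring_poly_ring P finite_minimal_path_covers ideal_degree_ideal x] by blast
  moreover have "finite C" "C \<subseteq> {1..n}"
    using C finite_minimal_path_cover unfolding minimal_path_covers_def by auto
  ultimately have "P = degree_ideal n C 1"
    using prime_colon_degree_ideal_eq[OF P _ _ x] by simp
  then show "P \<in> ass (poly_ring n) (path_ideal n)"
    using degree_ideal_in_ass[OF C] path_ideal_eq_monomial_ideal[where 'k = 'k] by simp
qed

end
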